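(* For every complex number $q$ with $0<|q|<1$, \[ \sum_{k=1}^{\infty}(-1)^kq^{k^2}[4k+1]\frac{(q;q^2)_k^3}{(q^2;q^2)_k^3}\sum_{i=1}^{2k}(-1)^i\frac{q^i}{[i]^2} =\frac{(q,q^3;q^2)_{\infty}}{(q^2;q^2)_{\infty}^2}\sum_{j=1}^{\infty}\frac{q^{2j}}{[2j]^2}. \]
   Context: For complex $x,q$ with $|q|<1$: $(x;q)_\infty=\prod_{i\ge 0}(1-xq^i)$ and, for an integer $n\ge 0$, $(x;q)_n=\prod_{i=0}^{n-1}(1-xq^i)$ (equivalently $(x;q)_\infty/(xq^n;q)_\infty$). Multiple arguments mean products: $(x_1,\dots,x_r;q)_m=(x_1;q)_m\cdots(x_r;q)_m$ for $m$ a nonnegative integer or $\infty$. The $q$-integer is $[n]=1+q+\cdots+q^{n-1}=(1-q^n)/(1-q)$. *)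

theory Defs
  imports "HOL-Analysis.Analysis"
begin

definition qpoch :: "complex \<Rightarrow> complex \<Rightarrow> nat \<Rightarrow> complex" where
  "qpoch x q n = (\<Prod>i<n. 1 - x * q ^ i)"

definition qpoch_inf :: "complex \<Rightarrow> complex \<Rightarrow> complex" where
  "qpoch_inf x q = (\<Prod>i. 1 - x * q ^ i)"

definition qint :: "complex \<Rightarrow> nat \<Rightarrow> complex" where
  "qint q n = (\<Sum>i<n. q ^ i)"

end

theory Submission
  imports Defs
begin

text \<open>
  Deform the summand by a parameter \<open>u\<close> (see \<open>deform\<close>). For \<open>N = q^(2n)\<close> the terminating
  very-well-poised sum of \<open>F(u, N, k)\<close> (\<open>wz_F\<close>) over \<open>k \<le> n\<close> equals the finite product of the
  factors \<open>\<gamma>(u, q^(2i))\<close> (\<open>step_factor\<close>), \<open>i < n\<close>: the difference \<open>F(q^2 N, k)/\<gamma>(N) - F(N, k)\<close>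
  telescopes with the certificate \<open>G(N, k)\<close> (\<open>wz_G\<close>). Differentiating this identity at
  \<open>u = 0\<close> turns the logarithmic derivatives of both sides into sums of \<open>q^m/(1 - q^m)^2\<close>, i.e. of
  \<open>(1 - q)^2 q^m/[m]^2\<close>. The theorem is the limit \<open>n \<rightarrow> \<infinity>\<close> of the differentiated identity;
  Tannery's theorem applies because its \<open>k\<close>-th term is \<open>O(C^k |q|^(k^2))\<close> uniformly in \<open>n\<close>.
\<close>

lemma norm_mult_power_le_norm:
  fixes q N :: "'a :: real_normed_div_algebra"
  assumes "norm q < 1" "norm N \<le> 1" "0 < m"
  shows "norm (N * q ^ m) \<le> norm q"
proof -
  have "norm q ^ m \<le> norm q ^ 1" by (rule power_decreasing) (use assms in auto)
  then have "norm N * norm q ^ m \<le> 1 * norm q"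
    by (intro mult_mono) (use assms in auto)
  then show ?thesis by (simp add: norm_mult norm_power)
qed

lemma norm_one_minus_mult_power_ge:
  fixes q N :: "'a :: real_normed_div_algebra"
  assumes "norm q < 1" "norm N \<le> 1" "0 < m"
  shows "1 - norm q \<le> norm (1 - N * q ^ m)"
  using norm_triangle_ineq2[of 1 "N * q ^ m"] norm_mult_power_le_norm[OF assms] by simp

lemma one_minus_mult_power_nonzero:
  fixes q N :: "'a :: real_normed_div_algebra"
  assumes "norm q < 1" "norm N \<le> 1" "0 < m"
  shows "1 - N * q ^ m \<noteq> 0"
  using norm_one_minus_mult_power_ge[OF assms] assms(1) by auto

lemma one_minus_power_nonzero:
  fixes q :: "'a :: real_normed_div_algebra"
  shows "norm q < 1 \<Longrightarrow> 0 < m \<Longrightarrow> 1 - q ^ m \<noteq> 0"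
  using one_minus_mult_power_nonzero[of q 1 m] by simp

lemma norm_one_minus_power_le_2:
  fixes q :: "'a :: real_normed_div_algebra"
  assumes "norm q < 1"
  shows "norm (1 - q ^ m) \<le> 2"
proof -
  have "norm (q ^ m) \<le> 1" using assms by (simp add: norm_power power_le_one)
  then show ?thesis using norm_triangle_ineq4[of 1 "q ^ m"] by simp
qed

text \<open>\<open>deform q u m = (1 - x q^m)(1 - q^m/x)\<close> for \<open>u = x + 1/x - 2\<close>.\<close>
definition deform :: "complex \<Rightarrow> complex \<Rightarrow> nat \<Rightarrow> complex" where
  "deform q u m = (1 - q ^ m)^2 - q ^ m * u"

lemma deform_nonzero:
  assumes q: "norm q < 1" and u: "norm u < (1 - norm q)^2" and m: "0 < m"
  shows "deform q u m \<noteq> 0"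
proof
  assume "deform q u m = 0"
  then have eq: "(1 - q ^ m)^2 = q ^ m * u" by (simp add: deform_def)
  have "(1 - norm q)^2 \<le> norm (1 - q ^ m)^2"
    using norm_one_minus_mult_power_ge[OF q _ m, of 1] q by (intro power_mono) auto
  also have "\<dots> = norm (q ^ m) * norm u" by (metis eq norm_mult norm_power)
  also have "\<dots> \<le> norm u"
    using q by (intro mult_left_le_one_le) (auto simp: norm_power power_le_one)
  finally show False using u by simp
qed

definition summand_ratio :: "complex \<Rightarrow> complex \<Rightarrow> complex \<Rightarrow> nat \<Rightarrow> complex" where
  "summand_ratio q u N i = - (q ^ (2*i+1)) * (1 - q ^ (2*i+1)) * deform q u (2*i+1)
     / ((1 - q ^ (2*i+2)) * (1 - N * q ^ (2*i+3)) * deform q u (2*i+2))"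

definition summand_prod :: "complex \<Rightarrow> complex \<Rightarrow> complex \<Rightarrow> nat \<Rightarrow> complex" where
  "summand_prod q u N k = (\<Prod>i<k. summand_ratio q u N i)"

definition terminating_factor :: "complex \<Rightarrow> complex \<Rightarrow> nat \<Rightarrow> complex" where
  "terminating_factor q N k = (\<Prod>i<k. 1 - N / q ^ (2*i))"

definition wz_F :: "complex \<Rightarrow> complex \<Rightarrow> complex \<Rightarrow> nat \<Rightarrow> complex" where
  "wz_F q u N k = (1 - q ^ (4*k+1)) / (1 - q) * summand_prod q u N k * terminating_factor q N k"

definition wz_G :: "complex \<Rightarrow> complex \<Rightarrow> complex \<Rightarrow> nat \<Rightarrow> complex" where
  "wz_G q u N k = q * N * (1 - q ^ (2*k+1)) * deform q u (2*k+1)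
     / ((1 - q * N) * (1 - q) * (1 - N * q ^ (2*k+3))) * summand_prod q u N k * terminating_factor q N k"

definition step_factor :: "complex \<Rightarrow> complex \<Rightarrow> complex \<Rightarrow> complex" where
  "step_factor q u N = (1 - q^3 * N) * (1 - q * N) / ((1 - q^2 * N)^2 - q^2 * N * u)"

lemma terminating_factor_vanishes:
  assumes "q \<noteq> 0" "n < k"
  shows "terminating_factor q (q ^ (2*n)) k = 0"
  unfolding terminating_factor_def using assms by (auto intro!: bexI[of _ n])

lemma terminating_factor_shift:
  assumes "q \<noteq> 0"
  shows "terminating_factor q (q^2 * N) (Suc k) = (1 - q^2 * N) * terminating_factor q N k"
proof (induction k)
  case 0 then show ?case by (simp add: terminating_factor_def)
next
  case (Suc k)
  have "q^2 * N / q ^ (2 * Suc k) = N / q ^ (2*k)"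
    using assms by (simp add: power_add power2_eq_square field_simps)
  with Suc show ?case by (simp add: terminating_factor_def)
qed

lemma summand_prod_shift:
  assumes q: "norm q < 1" and N: "norm N \<le> 1"
  shows "summand_prod q u (q^2 * N) k = summand_prod q u N k * (1 - q^3 * N) / (1 - q ^ (2*k+3) * N)"
proof (induction k)
  case 0
  have "1 - N * q^3 \<noteq> 0" using one_minus_mult_power_nonzero[OF q N, of 3] by simp
  then show ?case by (simp add: summand_prod_def mult.commute)
next
  case (Suc k)
  have N2: "norm (q^2 * N) \<le> 1"
    using q N by (simp add: norm_mult norm_power mult_le_one power_le_one)
  have n1: "1 - N * q ^ (2*k+3) \<noteq> 0" using one_minus_mult_power_nonzero[OF q N] by simp
  have n2: "1 - (q^2 * N) * q ^ (2*k+3) \<noteq> 0" using one_minus_mult_power_nonzero[OF q N2] by simp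
  have exponent: "(q^2 * N) * q ^ (2*k+3) = q ^ (2 * Suc k + 3) * N" by (simp add: power_add)
  have "summand_ratio q u (q^2 * N) k
      = summand_ratio q u N k * (1 - N * q ^ (2*k+3)) / (1 - (q^2 * N) * q ^ (2*k+3))"
  proof -
    have swap_factor: "\<And>a b c c' e :: complex. c \<noteq> 0 \<Longrightarrow> c' \<noteq> 0 \<Longrightarrow>
        a / (b * c * e) = a / (b * c' * e) * c' / c"
      by (simp add: field_simps)
    show ?thesis unfolding summand_ratio_def by (rule swap_factor) (use n1 n2 in auto)
  qed
  then have "summand_prod q u (q^2 * N) (Suc k)
      = summand_prod q u N k * summand_ratio q u N k * (1 - q^3 * N)
        * ((1 - N * q ^ (2*k+3)) / (1 - q ^ (2*k+3) * N)) / (1 - q ^ (2 * Suc k + 3) * N)"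
    using Suc exponent
    by (simp add: summand_prod_def)
  also have "(1 - N * q ^ (2*k+3)) / (1 - q ^ (2*k+3) * N) = 1"
    using n1 by (simp add: mult.commute)
  finally show ?case by (simp add: summand_prod_def)
qed

lemma wz_polynomial_identity:
  fixes q K N u :: complex
  shows "K * (1 - q^5*K^2) * (1 - q^2*N) * ((1 - q^2*N)^2 - q^2*N*u)
      - (1 - q^5*K^2) * (1 - q*N) * (1 - q^5*N*K) * (K - N)
      - q*N * (1 - q^3*K) * ((1 - q^3*K)^2 - q^3*K*u) * (K - N)
    = N * (1 - q^5*N*K) * (1 - q^2*K) * ((1 - q^2*K)^2 - q^2*K*u)"
  by algebra

text \<open>The WZ relation at \<open>k = j + 1\<close> after cancelling the common factor
  \<open>summand_prod q u N j * terminating_factor q N j\<close>; here \<open>K = q^(2j)\<close> and \<open>s\<close> is the \<open>j\<close>-th ratio.\<close>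
lemma wz_rational_identity:
  fixes q K N u :: complex
  assumes "K \<noteq> 0" "1 - q^5*N*K \<noteq> 0" "(1 - q^2*N)^2 - q^2*N*u \<noteq> 0" "1 - q^3*N \<noteq> 0"
    "1 - q*N \<noteq> 0" "1 - q \<noteq> 0" "1 - q^2*K \<noteq> 0" "1 - q^3*N*K \<noteq> 0"
    "(1 - q^2*K)^2 - q^2*K*u \<noteq> 0"
  defines "s \<equiv> - (q*K) * (1 - q*K) * ((1 - q*K)^2 - q*K*u)
                / ((1 - q^2*K) * (1 - q^3*N*K) * ((1 - q^2*K)^2 - q^2*K*u))"
  shows "(1 - q^5*K^2)/(1 - q) * s * ((1 - q^3*N)/(1 - q^5*N*K)) * (1 - q^2*N)
           / ((1 - q^3*N) * (1 - q*N) / ((1 - q^2*N)^2 - q^2*N*u))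
         - (1 - q^5*K^2)/(1 - q) * s * (1 - N/K)
       = q*N * (1 - q^3*K) * ((1 - q^3*K)^2 - q^3*K*u) / ((1 - q*N) * (1 - q) * (1 - q^5*N*K))
           * s * (1 - N/K)
         - q*N * (1 - q*K) * ((1 - q*K)^2 - q*K*u) / ((1 - q*N) * (1 - q) * (1 - q^3*N*K))"
proof -
  have cleared: "\<And>s eN e3 d1 d2 d3 d5 a b c :: complex.
      d5 \<noteq> 0 \<Longrightarrow> eN \<noteq> 0 \<Longrightarrow> d3 \<noteq> 0 \<Longrightarrow> d2 \<noteq> 0 \<Longrightarrow> d1 \<noteq> 0 \<Longrightarrow>
      a/d1 * s * (d3/d5) * b / (d3*d2/eN) - a/d1 * s * (1 - N/K) - c*e3/(d2*d1*d5) * s * (1 - N/K)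
      = s * (K*a*b*eN - a*d2*d5*(K-N) - c*e3*(K-N)) / (K*(d1*d2*d5))"
    using assms(1) by (simp add: field_simps)
  have cancelled: "\<And>e1 e2 d1 d2 d5 d6 d7 a :: complex.
      d5 \<noteq> 0 \<Longrightarrow> d2 \<noteq> 0 \<Longrightarrow> d1 \<noteq> 0 \<Longrightarrow> d6 \<noteq> 0 \<Longrightarrow> d7 \<noteq> 0 \<Longrightarrow> e2 \<noteq> 0 \<Longrightarrow>
      (- (q*K)*a*e1/(d6*d7*e2)) * (N*d5*d6*e2) / (K*(d1*d2*d5)) = - (q*N*a*e1/(d2*d1*d7))"
    using assms(1) by (simp add: field_simps)
  have "(1 - q^5*K^2)/(1 - q) * s * ((1 - q^3*N)/(1 - q^5*N*K)) * (1 - q^2*N)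
           / ((1 - q^3*N) * (1 - q*N) / ((1 - q^2*N)^2 - q^2*N*u))
         - (1 - q^5*K^2)/(1 - q) * s * (1 - N/K)
         - q*N * (1 - q^3*K) * ((1 - q^3*K)^2 - q^3*K*u) / ((1 - q*N) * (1 - q) * (1 - q^5*N*K))
           * s * (1 - N/K)
      = s * (K * (1 - q^5*K^2) * (1 - q^2*N) * ((1 - q^2*N)^2 - q^2*N*u)
          - (1 - q^5*K^2) * (1 - q*N) * (1 - q^5*N*K) * (K - N)
          - q*N * (1 - q^3*K) * ((1 - q^3*K)^2 - q^3*K*u) * (K - N))
        / (K * ((1 - q) * (1 - q*N) * (1 - q^5*N*K)))"
    by (rule cleared) (use assms in \<open>auto simp: mult.assoc\<close>)
  also have "\<dots> = s * (N * (1 - q^5*N*K) * (1 - q^2*K) * ((1 - q^2*K)^2 - q^2*K*u))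
        / (K * ((1 - q) * (1 - q*N) * (1 - q^5*N*K)))"
    by (simp only: wz_polynomial_identity)
  also have "\<dots> = - (q*N * (1 - q*K) * ((1 - q*K)^2 - q*K*u) / ((1 - q*N) * (1 - q) * (1 - q^3*N*K)))"
    unfolding s_def by (rule cancelled) (use assms in auto)
  finally show ?thesis by (simp add: algebra_simps)
qed

lemma wz_pair_0:
  assumes q: "norm q < 1" and N: "norm N \<le> 1"
  shows "wz_F q u (q^2 * N) 0 / step_factor q u N - wz_F q u N 0 = wz_G q u N 0"
proof -
  have a: "1 - q \<noteq> 0" using one_minus_power_nonzero[OF q, of 1] by simp
  have b: "1 - q * N \<noteq> 0" using one_minus_mult_power_nonzero[OF q N, of 1] by (simp add: mult.commute)
  have c: "1 - q^3 * N \<noteq> 0" using one_minus_mult_power_nonzero[OF q N, of 3] by (simp add: mult.commute)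
  have "wz_F q u (q^2 * N) 0 / step_factor q u N - wz_F q u N 0
      = ((1 - q^2*N)^2 - q^2*N*u) / ((1 - q^3*N) * (1 - q*N)) - 1"
    using a by (simp add: wz_F_def summand_prod_def terminating_factor_def step_factor_def)
  also have "\<dots> = ((1 - q^2*N)^2 - q^2*N*u - (1 - q^3*N) * (1 - q*N)) / ((1 - q^3*N) * (1 - q*N))"
    using b c by (simp add: diff_divide_distrib)
  also have "(1 - q^2*N)^2 - q^2*N*u - (1 - q^3*N) * (1 - q*N) = q * N * ((1 - q)^2 - q * u)"
    by algebra
  also have "q * N * ((1 - q)^2 - q * u) / ((1 - q^3*N) * (1 - q*N)) = wz_G q u N 0"
    using a by (simp add: wz_G_def summand_prod_def terminating_factor_def deform_def mult_ac)
  finally show ?thesis .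
qed

lemma wz_pair_Suc:
  assumes q: "q \<noteq> 0" "norm q < 1" and N: "norm N \<le> 1"
    and deform_nz: "\<And>m. 0 < m \<Longrightarrow> deform q u m \<noteq> 0"
    and step_nz: "(1 - q^2*N)^2 - q^2*N*u \<noteq> 0"
  shows "wz_F q u (q^2 * N) (Suc j) / step_factor q u N - wz_F q u N (Suc j)
       = wz_G q u N (Suc j) - wz_G q u N j"
proof -
  define K where "K = q ^ (2*j)"
  define P where "P = summand_prod q u N j"
  define T where "T = terminating_factor q N j"
  define s where "s = summand_ratio q u N j"
  have K: "K \<noteq> 0" using q by (simp add: K_def)
  have shift: "q ^ (2*j + c) = q ^ c * K" for c by (simp add: K_def power_add mult.commute)
  have pow: "q ^ (2*j+1) = q * K" "q ^ (2*j+2) = q^2 * K" "q ^ (2*j+3) = q^3 * K"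
    "q ^ (2 * Suc j + 1) = q^3 * K" "q ^ (2 * Suc j + 3) = q^5 * K" "q ^ (4 * Suc j + 1) = q^5 * K^2"
  proof -
    have "2 * Suc j + 1 = 2*j + 3" "2 * Suc j + 3 = 2*j + 5" "4 * Suc j + 1 = 2*j + (2*j + 5)"
      by simp_all
    then show "q ^ (2*j+1) = q * K" "q ^ (2*j+2) = q^2 * K" "q ^ (2*j+3) = q^3 * K"
      "q ^ (2 * Suc j + 1) = q^3 * K" "q ^ (2 * Suc j + 3) = q^5 * K" "q ^ (4 * Suc j + 1) = q^5 * K^2"
      by (simp_all only: shift) (simp_all add: power2_eq_square)
  qed
  have "1 - q ^ 1 \<noteq> 0" "1 - q ^ (2*j+2) \<noteq> 0" "1 - N * q ^ 1 \<noteq> 0" "1 - N * q ^ 3 \<noteq> 0"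
    "1 - N * q ^ (2 * Suc j + 3) \<noteq> 0" "1 - N * q ^ (2*j+3) \<noteq> 0" "deform q u (2*j+2) \<noteq> 0"
    by (intro one_minus_power_nonzero one_minus_mult_power_nonzero deform_nz q(2) N; simp)+
  note raw = this[unfolded pow deform_def]
  have nz: "1 - q \<noteq> 0" "1 - q*N \<noteq> 0" "1 - q^3*N \<noteq> 0" "1 - q^5*N*K \<noteq> 0"
    "1 - q^3*N*K \<noteq> 0" "1 - q^2*K \<noteq> 0" "(1 - q^2*K)^2 - q^2*K*u \<noteq> 0"
    using raw by (simp_all add: mult_ac)
  have s: "s = - (q*K) * (1 - q*K) * ((1 - q*K)^2 - q*K*u)
                / ((1 - q^2*K) * (1 - q^3*N*K) * ((1 - q^2*K)^2 - q^2*K*u))"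
    unfolding s_def summand_ratio_def deform_def pow by (simp add: mult_ac)
  have F_shift: "wz_F q u (q^2 * N) (Suc j)
      = (1 - q^5*K^2)/(1 - q) * (P * s * (1 - q^3*N) / (1 - q^5*K*N)) * ((1 - q^2*N) * T)"
    unfolding wz_F_def summand_prod_shift[OF q(2) N] terminating_factor_shift[OF q(1)] pow
    by (simp add: P_def T_def s_def summand_prod_def)
  have F: "wz_F q u N (Suc j) = (1 - q^5*K^2)/(1 - q) * (P * s) * (T * (1 - N/K))"
    unfolding wz_F_def pow by (simp add: P_def T_def s_def summand_prod_def terminating_factor_def K_def)
  have G_Suc: "wz_G q u N (Suc j) = q*N * (1 - q^3*K) * ((1 - q^3*K)^2 - q^3*K*u)
      / ((1 - q*N) * (1 - q) * (1 - q^5*N*K)) * (P * s) * (T * (1 - N/K))"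
    unfolding wz_G_def deform_def pow
    by (simp add: P_def T_def s_def summand_prod_def terminating_factor_def K_def mult_ac)
  have G: "wz_G q u N j = q*N * (1 - q*K) * ((1 - q*K)^2 - q*K*u)
      / ((1 - q*N) * (1 - q) * (1 - q^3*N*K)) * P * T"
    unfolding wz_G_def deform_def pow by (simp add: P_def T_def mult_ac)
  have "wz_F q u (q^2 * N) (Suc j) / step_factor q u N - wz_F q u N (Suc j)
      = P * T * ((1 - q^5*K^2)/(1 - q) * s * ((1 - q^3*N)/(1 - q^5*N*K)) * (1 - q^2*N)
           / ((1 - q^3*N) * (1 - q*N) / ((1 - q^2*N)^2 - q^2*N*u))
         - (1 - q^5*K^2)/(1 - q) * s * (1 - N/K))"
    unfolding F_shift F step_factor_def by (simp add: algebra_simps)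
  also have "\<dots> = P * T * (q*N * (1 - q^3*K) * ((1 - q^3*K)^2 - q^3*K*u)
           / ((1 - q*N) * (1 - q) * (1 - q^5*N*K)) * s * (1 - N/K)
         - q*N * (1 - q*K) * ((1 - q*K)^2 - q*K*u) / ((1 - q*N) * (1 - q) * (1 - q^3*N*K)))"
    unfolding s by (subst wz_rational_identity) (use K nz step_nz in auto)
  also have "\<dots> = wz_G q u N (Suc j) - wz_G q u N j"
    unfolding G_Suc G by (simp add: algebra_simps)
  finally show ?thesis .
qed

lemma wz_telescope:
  assumes q: "q \<noteq> 0" "norm q < 1" and N: "norm N \<le> 1"
    and deform_nz: "\<And>m. 0 < m \<Longrightarrow> deform q u m \<noteq> 0"
    and step_nz: "(1 - q^2*N)^2 - q^2*N*u \<noteq> 0"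
  shows "(\<Sum>k\<le>M. wz_F q u (q^2 * N) k / step_factor q u N - wz_F q u N k) = wz_G q u N M"
proof (induction M)
  case 0 then show ?case using wz_pair_0[OF q(2) N] by simp
next
  case (Suc M) then show ?case using wz_pair_Suc[OF q N deform_nz step_nz, of M] by simp
qed

lemma terminating_summation:
  assumes q: "q \<noteq> 0" "norm q < 1" and deform_nz: "\<And>m. 0 < m \<Longrightarrow> deform q u m \<noteq> 0"
  shows "(\<Sum>k\<le>n. wz_F q u (q ^ (2*n)) k) = (\<Prod>i<n. step_factor q u (q ^ (2*i)))"
proof (induction n)
  case 0 then show ?case
    using one_minus_power_nonzero[OF q(2), of 1]
    by (simp add: wz_F_def summand_prod_def terminating_factor_def)
next
  case (Suc n)
  define N where "N = q ^ (2*n)"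
  have N: "norm N \<le> 1" using q(2) by (simp add: N_def norm_power power_le_one)
  have qN: "q^2 * N = q ^ (2 * Suc n)" by (simp add: N_def power_add power2_eq_square)
  have step_nz: "(1 - q^2*N)^2 - q^2*N*u \<noteq> 0"
    using deform_nz[of "2 * Suc n"] by (simp add: deform_def qN)
  have "step_factor q u N \<noteq> 0"
    using step_nz one_minus_mult_power_nonzero[OF q(2) N, of 1] one_minus_mult_power_nonzero[OF q(2) N, of 3]
    by (simp add: step_factor_def mult.commute)
  moreover have "wz_G q u N (Suc n) = 0" "wz_F q u N (Suc n) = 0"
    using terminating_factor_vanishes[OF q(1), of n "Suc n"] by (simp_all add: wz_F_def wz_G_def N_def)
  moreover note wz_telescope[OF q N deform_nz step_nz, of "Suc n"]
  ultimately have "(\<Sum>k\<le>Suc n. wz_F q u (q^2 * N) k) = step_factor q u N * (\<Sum>k\<le>n. wz_F q u N k)"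
    by (simp add: sum_subtractf sum_divide_distrib[symmetric] sum_distrib_left field_simps)
  also have "\<dots> = (\<Prod>i<Suc n. step_factor q u (q ^ (2*i)))"
    using Suc by (simp add: N_def mult.commute)
  finally show ?case by (simp only: qN)
qed

definition harm_alt :: "complex \<Rightarrow> nat \<Rightarrow> complex" where
  "harm_alt q k = (\<Sum>i<k. q ^ (2*i+2) / (1 - q ^ (2*i+2))^2 - q ^ (2*i+1) / (1 - q ^ (2*i+1))^2)"

definition harm_even :: "complex \<Rightarrow> nat \<Rightarrow> complex" where
  "harm_even q n = (\<Sum>i<n. q ^ (2*i+2) / (1 - q ^ (2*i+2))^2)"

lemma has_field_derivative_moebius_at_0:
  fixes a b c d e :: "'a :: real_normed_field"
  assumes "a \<noteq> 0" "d \<noteq> 0"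
  shows "((\<lambda>u. c * (a - b*u) / (d - e*u)) has_field_derivative c * a / d * (e/d - b/a)) (at 0)"
proof -
  have "((\<lambda>u. c * (a - b*u) / (d - e*u)) has_field_derivative
      ((c * (0 - b*1)) * (d - e*0) - (c * (a - b*0)) * (0 - e*1)) / ((d - e*0) * (d - e*0))) (at 0)"
    by (rule DERIV_divide) (auto intro!: derivative_eq_intros simp: assms)
  moreover have "((c * (0 - b*1)) * (d - e*0) - (c * (a - b*0)) * (0 - e*1)) / ((d - e*0) * (d - e*0))
      = c * a / d * (e/d - b/a)"
    using assms by (simp add: field_simps)
  ultimately show ?thesis by simp
qed

lemma summand_ratio_0_nonzero:
  assumes q: "q \<noteq> 0" "norm q < 1" and N: "norm N \<le> 1"
  shows "summand_ratio q 0 N i \<noteq> 0"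
  using q one_minus_power_nonzero[OF q(2), of "2*i+1"] one_minus_power_nonzero[OF q(2), of "2*i+2"]
    one_minus_mult_power_nonzero[OF q(2) N, of "2*i+3"]
  by (simp add: summand_ratio_def deform_def)

lemma summand_ratio_deriv:
  assumes q: "norm q < 1"
  shows "((\<lambda>u. summand_ratio q u N i) has_field_derivative summand_ratio q 0 N i
           * (q ^ (2*i+2) / (1 - q ^ (2*i+2))^2 - q ^ (2*i+1) / (1 - q ^ (2*i+1))^2)) (at 0)"
proof -
  define c where "c = - (q ^ (2*i+1)) * (1 - q ^ (2*i+1)) / ((1 - q ^ (2*i+2)) * (1 - N * q ^ (2*i+3)))"
  define a where "a = (1 - q ^ (2*i+1))^2"
  define b where "b = q ^ (2*i+1)"
  define d where "d = (1 - q ^ (2*i+2))^2"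
  define e where "e = q ^ (2*i+2)"
  have "a \<noteq> 0" "d \<noteq> 0"
    using one_minus_power_nonzero[OF q, of "2*i+1"] one_minus_power_nonzero[OF q, of "2*i+2"]
    by (simp_all add: a_def d_def)
  have f: "summand_ratio q u N i = c * (a - b*u) / (d - e*u)" for u
    by (simp add: summand_ratio_def deform_def a_def b_def c_def d_def e_def)
  have "((\<lambda>u. summand_ratio q u N i) has_field_derivative c * a / d * (e/d - b/a)) (at 0)"
    unfolding f by (rule has_field_derivative_moebius_at_0) fact+
  moreover have "summand_ratio q 0 N i = c * a / d" by (simp add: f)
  ultimately show ?thesis by (simp only: a_def b_def d_def e_def)
qed

lemma wz_F_deriv:
  assumes q: "q \<noteq> 0" "norm q < 1" and N: "norm N \<le> 1"
  shows "((\<lambda>u. wz_F q u N k) has_field_derivative wz_F q 0 N k * harm_alt q k) (at 0)"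
proof -
  have "((\<lambda>u. summand_prod q u N k) has_field_derivative summand_prod q 0 N k
      * (\<Sum>i<k. summand_ratio q 0 N i
           * (q ^ (2*i+2) / (1 - q ^ (2*i+2))^2 - q ^ (2*i+1) / (1 - q ^ (2*i+1))^2)
           / summand_ratio q 0 N i)) (at 0)"
    unfolding summand_prod_def
    by (rule has_field_derivative_prod') (use summand_ratio_0_nonzero[OF q N] summand_ratio_deriv[OF q(2)] in auto)
  also have "(\<Sum>i<k. summand_ratio q 0 N i
           * (q ^ (2*i+2) / (1 - q ^ (2*i+2))^2 - q ^ (2*i+1) / (1 - q ^ (2*i+1))^2)
           / summand_ratio q 0 N i) = harm_alt q k"
    unfolding harm_alt_def by (rule sum.cong) (use summand_ratio_0_nonzero[OF q N] in auto)
  finally have "((\<lambda>u. (1 - q ^ (4*k+1)) / (1 - q) * terminating_factor q N k * summand_prod q u N k)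
      has_field_derivative (1 - q ^ (4*k+1)) / (1 - q) * terminating_factor q N k
        * (summand_prod q 0 N k * harm_alt q k)) (at 0)"
    by (rule DERIV_cmult)
  then show ?thesis by (simp add: wz_F_def mult_ac)
qed

lemma step_factor_0_nonzero:
  assumes q: "norm q < 1"
  shows "step_factor q 0 (q ^ (2*i)) \<noteq> 0"
proof -
  have N: "norm (q ^ (2*i)) \<le> 1" using q by (simp add: norm_power power_le_one)
  have e: "q^2 * q ^ (2*i) = q ^ (2*i+2)" unfolding power_add by (rule mult.commute)
  have "1 - q ^ (2*i) * q ^ 1 \<noteq> 0" "1 - q ^ (2*i) * q ^ 3 \<noteq> 0" "1 - q ^ (2*i+2) \<noteq> 0"
    by (intro one_minus_mult_power_nonzero one_minus_power_nonzero q N; simp)+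
  then show ?thesis unfolding step_factor_def by (simp only: e) (simp add: mult.commute)
qed

lemma step_factor_deriv:
  assumes q: "norm q < 1"
  shows "((\<lambda>u. step_factor q u (q ^ (2*i))) has_field_derivative
           step_factor q 0 (q ^ (2*i)) * (q ^ (2*i+2) / (1 - q ^ (2*i+2))^2)) (at 0)"
proof -
  have e: "q^2 * q ^ (2*i) = q ^ (2*i+2)" unfolding power_add by (rule mult.commute)
  have d: "(1 - q ^ (2*i+2))^2 \<noteq> 0" using one_minus_power_nonzero[OF q, of "2*i+2"] by simp
  define c where "c = (1 - q^3 * q ^ (2*i)) * (1 - q * q ^ (2*i))"
  have "step_factor q u (q ^ (2*i)) = c * (1 - 0*u) / ((1 - q ^ (2*i+2))^2 - q ^ (2*i+2) * u)" for u
    by (simp only: step_factor_def e c_def) simp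
  with has_field_derivative_moebius_at_0[of 1 "(1 - q ^ (2*i+2))^2" c 0 "q ^ (2*i+2)"] d
  show ?thesis by simp
qed

lemma differentiated_summation:
  assumes q: "q \<noteq> 0" "norm q < 1"
  shows "(\<Sum>k\<le>n. wz_F q 0 (q ^ (2*n)) k * harm_alt q k)
       = (\<Prod>i<n. step_factor q 0 (q ^ (2*i))) * harm_even q n"
proof -
  define S where "S = ball (0::complex) ((1 - norm q)^2)"
  have S: "open S" "0 \<in> S" using q by (auto simp: S_def)
  have N: "norm (q ^ (2*n)) \<le> 1" using q by (simp add: norm_power power_le_one)
  have "((\<lambda>u. \<Sum>k\<le>n. wz_F q u (q ^ (2*n)) k) has_field_derivative
      (\<Sum>k\<le>n. wz_F q 0 (q ^ (2*n)) k * harm_alt q k)) (at 0)"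
    by (rule DERIV_sum) (rule wz_F_deriv[OF q N])
  moreover have "(\<Sum>k\<le>n. wz_F q u (q ^ (2*n)) k) = (\<Prod>i<n. step_factor q u (q ^ (2*i)))"
    if "u \<in> S" for u
    by (intro terminating_summation q deform_nonzero) (use that in \<open>auto simp: S_def\<close>)
  ultimately have lhs: "((\<lambda>u. \<Prod>i<n. step_factor q u (q ^ (2*i))) has_field_derivative
      (\<Sum>k\<le>n. wz_F q 0 (q ^ (2*n)) k * harm_alt q k)) (at 0)"
    by (rule has_field_derivative_transform_within_open[OF _ S])
  have "((\<lambda>u. \<Prod>i<n. step_factor q u (q ^ (2*i))) has_field_derivative
      (\<Prod>i<n. step_factor q 0 (q ^ (2*i)))
      * (\<Sum>i<n. step_factor q 0 (q ^ (2*i)) * (q ^ (2*i+2) / (1 - q ^ (2*i+2))^2)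
          / step_factor q 0 (q ^ (2*i)))) (at 0)"
    by (rule has_field_derivative_prod') (use step_factor_0_nonzero[OF q(2)] step_factor_deriv[OF q(2)] in auto)
  also have "(\<Sum>i<n. step_factor q 0 (q ^ (2*i)) * (q ^ (2*i+2) / (1 - q ^ (2*i+2))^2)
          / step_factor q 0 (q ^ (2*i))) = harm_even q n"
    unfolding harm_even_def by (rule sum.cong) (use step_factor_0_nonzero[OF q(2)] in auto)
  finally show ?thesis by (rule DERIV_unique[OF lhs])
qed

lemma qint_closed_form:
  assumes "q \<noteq> 1"
  shows "qint q m = (1 - q ^ m) / (1 - q)"
  using assms by (simp add: qint_def sum_gp_strict)

lemma qpoch_nonzero:
  assumes "norm x < 1" "norm p \<le> 1"
  shows "qpoch x p k \<noteq> 0"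
proof -
  have "norm (x * p ^ i) \<le> norm x" for i
    using assms by (simp add: norm_mult norm_power mult_left_le power_le_one)
  then have "1 - x * p ^ i \<noteq> 0" for i
    using assms(1) by (metis eq_iff_diff_eq_0 norm_one order.strict_trans1 order.irrefl)
  then show ?thesis unfolding qpoch_def by auto
qed

lemma summand_prod_0_0:
  assumes q: "norm q < 1"
  shows "summand_prod q 0 0 k = (-1)^k * q ^ (k^2) * (qpoch q (q^2) k)^3 / (qpoch (q^2) (q^2) k)^3"
proof (induction k)
  case 0 then show ?case by (simp add: summand_prod_def qpoch_def)
next
  case (Suc k)
  have e1: "q * (q^2)^k = q ^ (2*k+1)" by (simp add: power_mult[symmetric] mult.commute)
  have e2: "q^2 * (q^2)^k = q ^ (2*k+2)" unfolding power_add power_mult by (rule mult.commute)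
  have "(Suc k)^2 = k^2 + (2*k+1)" by (simp add: power2_eq_square)
  then have e3: "q ^ ((Suc k)^2) = q ^ (k^2) * q ^ (2*k+1)" by (simp add: power_add)
  have d: "1 - q ^ (2*k+2) \<noteq> 0" using one_minus_power_nonzero[OF q, of "2*k+2"] by simp
  have P: "qpoch (q^2) (q^2) k \<noteq> 0"
    using q by (intro qpoch_nonzero) (auto simp: norm_power power_less_one_iff power_le_one)
  have ratio: "summand_ratio q 0 0 k = - (q ^ (2*k+1)) * (1 - q ^ (2*k+1))^3 / (1 - q ^ (2*k+2))^3"
    by (simp add: summand_ratio_def deform_def power2_eq_square power3_eq_cube mult_ac)
  have regroup: "\<And>s x A B y a d :: complex. d \<noteq> 0 \<Longrightarrow> B \<noteq> 0 \<Longrightarrow>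
      s * x * A^3 / B^3 * (- y * a^3 / d^3) = (-s) * (x*y) * (A*a)^3 / (B*d)^3"
    by (simp add: field_simps)
  have "summand_prod q 0 0 (Suc k)
      = (-1)^k * q ^ (k^2) * (qpoch q (q^2) k)^3 / (qpoch (q^2) (q^2) k)^3
        * (- (q ^ (2*k+1)) * (1 - q ^ (2*k+1))^3 / (1 - q ^ (2*k+2))^3)"
    using Suc by (simp add: summand_prod_def ratio)
  also have "\<dots> = (-1)^(Suc k) * (q ^ (k^2) * q ^ (2*k+1)) * (qpoch q (q^2) k * (1 - q ^ (2*k+1)))^3
        / (qpoch (q^2) (q^2) k * (1 - q ^ (2*k+2)))^3"
    using regroup[OF d P, of "(-1)^k"] by simp
  also have "\<dots> = (-1)^(Suc k) * q ^ ((Suc k)^2) * (qpoch q (q^2) (Suc k))^3 / (qpoch (q^2) (q^2) (Suc k))^3"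
    unfolding qpoch_def prod.lessThan_Suc e1 e2 e3 ..
  finally show ?case .
qed

lemma wz_F_0_0:
  assumes q: "norm q < 1"
  shows "wz_F q 0 0 k = (-1)^k * q ^ (k^2) * qint q (4*k+1) * (qpoch q (q^2) k)^3 / (qpoch (q^2) (q^2) k)^3"
proof -
  have "q \<noteq> 1" using q by auto
  then show ?thesis
    unfolding wz_F_def summand_prod_0_0[OF q] qint_closed_form[OF \<open>q \<noteq> 1\<close>]
    by (simp add: terminating_factor_def)
qed

lemma harm_alt_eq:
  assumes q: "norm q < 1"
  shows "(1 - q)^2 * harm_alt q k = (\<Sum>i = 1..2*k. (-1)^i * q ^ i / (qint q i)^2)"
proof (induction k)
  case 0 then show ?case by (simp add: harm_alt_def)
next
  case (Suc k)
  have nz: "1 - q \<noteq> 0" "1 - q ^ (2*k+1) \<noteq> 0" "1 - q ^ (2*k+2) \<noteq> 0"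
    using q one_minus_power_nonzero[OF q, of "2*k+1"] one_minus_power_nonzero[OF q, of "2*k+2"]
    by auto
  have "{1..2 * Suc k} = insert (2*k+2) (insert (2*k+1) {1..2*k})" by auto
  then have "(\<Sum>i = 1..2 * Suc k. (-1)^i * q ^ i / (qint q i)^2)
      = (\<Sum>i = 1..2*k. (-1)^i * q ^ i / (qint q i)^2)
        + ((-1)^(2*k+1) * q ^ (2*k+1) / (qint q (2*k+1))^2 + (-1)^(2*k+2) * q ^ (2*k+2) / (qint q (2*k+2))^2)"
    by simp
  also have "(-1)^(2*k+1) * q ^ (2*k+1) / (qint q (2*k+1))^2 + (-1)^(2*k+2) * q ^ (2*k+2) / (qint q (2*k+2))^2
      = (1 - q)^2 * (q ^ (2*k+2) / (1 - q ^ (2*k+2))^2 - q ^ (2*k+1) / (1 - q ^ (2*k+1))^2)"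
    using nz by (simp add: qint_closed_form field_simps)
  finally show ?case using Suc by (simp add: harm_alt_def algebra_simps)
qed

lemma harm_even_eq:
  assumes q: "norm q < 1"
  shows "(1 - q)^2 * harm_even q n = (\<Sum>j<Suc n. if j = 0 then 0 else q ^ (2*j) / (qint q (2*j))^2)"
proof (induction n)
  case 0 then show ?case by (simp add: harm_even_def)
next
  case (Suc n)
  have nz: "1 - q \<noteq> 0" "1 - q ^ (2*n+2) \<noteq> 0"
    using q one_minus_power_nonzero[OF q, of "2*n+2"] by auto
  have "2 * Suc n = 2*n+2" by simp
  then have "q ^ (2 * Suc n) / (qint q (2 * Suc n))^2 = (1 - q)^2 * (q ^ (2*n+2) / (1 - q ^ (2*n+2))^2)"
    using nz by (simp add: qint_closed_form field_simps)
  then show ?case using Suc by (simp add: harm_even_def algebra_simps)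
qed

lemma convergent_prod_qpoch:
  fixes x p :: complex
  assumes "norm p < 1"
  shows "convergent_prod (\<lambda>i. 1 - x * p ^ i)"
proof -
  have "summable (\<lambda>i. norm ((1 - x * p ^ i) - 1))"
    using assms by (simp add: norm_mult norm_power summable_mult summable_geometric)
  then show ?thesis by (intro abs_convergent_prod_imp_convergent_prod summable_imp_abs_convergent_prod)
qed

lemma qpoch_LIMSEQ:
  assumes "norm p < 1"
  shows "(\<lambda>n. qpoch x p n) \<longlonglongrightarrow> qpoch_inf x p"
  using convergent_prod_LIMSEQ[OF convergent_prod_qpoch[OF assms]]
  unfolding qpoch_def qpoch_inf_def by (simp add: LIMSEQ_lessThan_iff_atMost)

lemma qpoch_inf_nonzero:
  assumes "norm x < 1" "norm p < 1"
  shows "qpoch_inf x p \<noteq> 0"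
proof -
  have "1 - x * p ^ i \<noteq> 0" for i
    using qpoch_nonzero[of x p "Suc i"] assms by (simp add: qpoch_def)
  with convergent_prod_qpoch[OF assms(2)] show ?thesis
    unfolding qpoch_inf_def by (intro prodinf_nonzero)
qed

lemma step_factor_prod:
  "(\<Prod>i<n. step_factor q 0 (q ^ (2*i))) = qpoch q (q^2) n * qpoch (q^3) (q^2) n / (qpoch (q^2) (q^2) n)^2"
proof -
  have "step_factor q 0 (q ^ (2*i)) = (1 - q * (q^2)^i) * (1 - q^3 * (q^2)^i) / (1 - q^2 * (q^2)^i)^2" for i
    unfolding step_factor_def power_mult by (simp add: mult.commute)
  then show ?thesis
    by (simp add: qpoch_def prod_dividef prod.distrib prod_power_distrib)
qed

lemma step_factor_prod_LIMSEQ: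
  assumes q: "norm q < 1"
  shows "(\<lambda>n. \<Prod>i<n. step_factor q 0 (q ^ (2*i)))
     \<longlonglongrightarrow> qpoch_inf q (q^2) * qpoch_inf (q^3) (q^2) / (qpoch_inf (q^2) (q^2))^2"
proof -
  have p: "norm (q^2) < 1" using q by (simp add: norm_power power_less_one_iff)
  show ?thesis
    unfolding step_factor_prod
    by (intro tendsto_intros qpoch_LIMSEQ[OF p]) (use qpoch_inf_nonzero[OF p p] in simp)
qed

lemma wz_F_LIMSEQ:
  assumes q: "q \<noteq> 0" "norm q < 1"
  shows "(\<lambda>n. wz_F q 0 (q ^ (2*n)) k) \<longlonglongrightarrow> wz_F q 0 0 k"
proof -
  have L: "(\<lambda>n. q ^ (2*n)) \<longlonglongrightarrow> 0"
    using q(2) by (simp add: power_mult LIMSEQ_power_zero norm_power power_less_one_iff)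
  have "(\<lambda>n. summand_ratio q 0 (q ^ (2*n)) i) \<longlonglongrightarrow> summand_ratio q 0 0 i" for i
  proof -
    have "1 - q ^ (2*i+2) \<noteq> 0" using one_minus_power_nonzero[OF q(2), of "2*i+2"] by simp
    then show ?thesis unfolding summand_ratio_def by (intro tendsto_intros L) (simp add: deform_def)
  qed
  then show ?thesis
    unfolding wz_F_def summand_prod_def terminating_factor_def by (intro tendsto_intros L) (simp_all add: q)
qed

lemma summable_even_terms:
  assumes q: "norm q < 1"
  shows "summable (\<lambda>j. if j = 0 then 0 else q ^ (2*j) / (qint q (2*j))^2)"
proof -
  define r where "r = 1 - norm q"
  have r: "0 < r" using q by (simp add: r_def)
  have "norm (if j = 0 then 0 else q ^ (2*j) / (qint q (2*j))^2) \<le> 4 / r^2 * (norm q ^ 2) ^ j" for j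
  proof (cases "j = 0")
    case True then show ?thesis using r by simp
  next
    case False
    have "q \<noteq> 1" using q by auto
    have d: "r \<le> norm (1 - q ^ (2*j))"
      using norm_one_minus_mult_power_ge[OF q, of 1 "2*j"] False by (simp add: r_def)
    have "norm (q ^ (2*j) / (qint q (2*j))^2) = norm q ^ (2*j) * norm (1 - q)^2 / norm (1 - q ^ (2*j))^2"
      unfolding qint_closed_form[OF \<open>q \<noteq> 1\<close>] by (simp add: norm_divide norm_power norm_mult power_divide)
    also have "\<dots> \<le> norm q ^ (2*j) * 2^2 / r^2"
      using norm_one_minus_power_le_2[OF q, of 1] r d
      by (intro frac_le mult_left_mono power_mono) auto
    also have "\<dots> = 4 / r^2 * (norm q ^ 2) ^ j" by (simp add: power_mult)
    finally show ?thesis using False by simp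
  qed
  moreover have "summable (\<lambda>j. 4 / r^2 * (norm q ^ 2) ^ j)"
    using q by (intro summable_mult summable_geometric) (simp add: power_less_one_iff)
  ultimately show ?thesis by (blast intro: summable_comparison_test')
qed

lemma prod_mult_power_odd:
  fixes c x :: "'a :: comm_monoid_mult"
  shows "(\<Prod>i<k. c * x ^ (2*i+1)) = c ^ k * x ^ (k^2)"
proof (induction k)
  case 0 then show ?case by simp
next
  case (Suc k)
  have "(Suc k)^2 = k^2 + (2*k+1)" by (simp add: power2_eq_square)
  with Suc show ?case by (simp add: power_add mult_ac)
qed

lemma norm_summand_ratio_le:
  assumes q: "norm q < 1" and N: "norm N \<le> 1"
  shows "norm (summand_ratio q 0 N i) \<le> 8 / (1 - norm q)^4 * norm q ^ (2*i+1)"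
proof -
  define r where "r = 1 - norm q"
  have r: "0 < r" using q by (simp add: r_def)
  have num: "norm (1 - q ^ (2*i+1)) \<le> 2" by (rule norm_one_minus_power_le_2[OF q])
  have den: "r \<le> norm (1 - q ^ (2*i+2))" "r \<le> norm (1 - N * q ^ (2*i+3))"
    using norm_one_minus_mult_power_ge[OF q _, of 1 "2*i+2"] norm_one_minus_mult_power_ge[OF q N, of "2*i+3"]
    by (simp_all add: r_def)
  have "norm (summand_ratio q 0 N i)
      = norm q ^ (2*i+1) * (norm (1 - q ^ (2*i+1)) * norm (1 - q ^ (2*i+1))^2)
        / (norm (1 - q ^ (2*i+2)) * norm (1 - N * q ^ (2*i+3)) * norm (1 - q ^ (2*i+2))^2)"
    by (simp add: summand_ratio_def deform_def norm_mult norm_divide norm_power mult.assoc)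
  also have "\<dots> \<le> norm q ^ (2*i+1) * (2 * 2^2) / (r * r * r^2)"
    using num den r by (intro frac_le mult_left_mono mult_mono power_mono) auto
  also have "\<dots> = 8 / (1 - norm q)^4 * norm q ^ (2*i+1)"
    by (simp add: r_def power2_eq_square power4_eq_xxxx mult_ac)
  finally show ?thesis .
qed

lemma norm_summand_prod_le:
  assumes q: "norm q < 1" and N: "norm N \<le> 1"
  shows "norm (summand_prod q 0 N k) \<le> (8 / (1 - norm q)^4)^k * norm q ^ (k^2)"
proof -
  have "norm (summand_prod q 0 N k) = (\<Prod>i<k. norm (summand_ratio q 0 N i))"
    by (simp add: summand_prod_def prod_norm)
  also have "\<dots> \<le> (\<Prod>i<k. 8 / (1 - norm q)^4 * norm q ^ (2*i+1))"
    by (rule prod_mono) (use norm_summand_ratio_le[OF q N] in auto)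
  also have "\<dots> = (8 / (1 - norm q)^4)^k * norm q ^ (k^2)" by (rule prod_mult_power_odd)
  finally show ?thesis .
qed

lemma norm_terminating_factor_le:
  assumes q: "q \<noteq> 0" "norm q < 1"
  shows "norm (terminating_factor q (q ^ (2*n)) k) \<le> 2^k"
proof (cases "n < k")
  case True then show ?thesis using terminating_factor_vanishes[OF q(1) True] by simp
next
  case False
  have "norm (terminating_factor q (q ^ (2*n)) k) = (\<Prod>i<k. norm (1 - q ^ (2*n) / q ^ (2*i)))"
    by (simp add: terminating_factor_def prod_norm)
  also have "\<dots> \<le> (\<Prod>i<k. 2)"
  proof (rule prod_mono)
    fix i assume "i \<in> {..<k}"
    then have "q ^ (2*n) / q ^ (2*i) = q ^ (2*n - 2*i)" using False q(1) by (simp add: power_diff)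
    then show "0 \<le> norm (1 - q ^ (2*n) / q ^ (2*i)) \<and> norm (1 - q ^ (2*n) / q ^ (2*i)) \<le> 2"
      using norm_one_minus_power_le_2[OF q(2), of "2*n - 2*i"] by simp
  qed
  finally show ?thesis by simp
qed

lemma norm_harm_alt_le:
  assumes q: "norm q < 1"
  shows "norm (harm_alt q k) \<le> k * (2 / (1 - norm q)^2)"
proof -
  have ratio_bound: "norm (q ^ m / (1 - q ^ m)^2) \<le> 1 / (1 - norm q)^2" if "0 < m" for m
  proof -
    have "1 - norm q \<le> norm (1 - q ^ m)" using norm_one_minus_mult_power_ge[OF q _ that, of 1] by simp
    moreover have "norm (q ^ m) \<le> 1" using q by (simp add: norm_power power_le_one)
    ultimately have "norm (q ^ m) / norm (1 - q ^ m)^2 \<le> 1 / (1 - norm q)^2"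
      using q by (intro frac_le power_mono) auto
    then show ?thesis by (simp add: norm_divide norm_power)
  qed
  have "norm (harm_alt q k)
      \<le> (\<Sum>i<k. norm (q ^ (2*i+2) / (1 - q ^ (2*i+2))^2) + norm (q ^ (2*i+1) / (1 - q ^ (2*i+1))^2))"
    unfolding harm_alt_def by (intro order.trans[OF norm_sum] sum_mono norm_triangle_ineq4)
  also have "\<dots> \<le> (\<Sum>i<k. 1 / (1 - norm q)^2 + 1 / (1 - norm q)^2)"
    by (intro sum_mono add_mono ratio_bound) auto
  finally show ?thesis by simp
qed

lemma norm_differentiated_term_le:
  assumes q: "q \<noteq> 0" "norm q < 1"
  shows "norm (wz_F q 0 (q ^ (2*n)) k * harm_alt q k * (1 - q)^2)
     \<le> 16 / (1 - norm q)^3 * ((4 * (8 / (1 - norm q)^4))^k * norm q ^ (k^2))"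
proof -
  define r where "r = 1 - norm q"
  define B where "B = 8 / r^4"
  have r: "0 < r" using q by (simp add: r_def)
  have B: "0 \<le> B" using r by (simp add: B_def)
  have N: "norm (q ^ (2*n)) \<le> 1" using q by (simp add: norm_power power_le_one)
  have "r \<le> norm (1 - q)" using norm_one_minus_mult_power_ge[OF q(2), of 1 1] by (simp add: r_def)
  then have qint: "norm ((1 - q ^ (4*k+1)) / (1 - q)) \<le> 2 / r"
    unfolding norm_divide using r by (intro frac_le norm_one_minus_power_le_2[OF q(2)]) auto
  have sq: "norm ((1 - q)^2) \<le> 4"
    using norm_one_minus_power_le_2[OF q(2), of 1] power_mono[of "norm (1 - q)" 2 2]
    by (simp add: norm_power)
  have "real k \<le> 2^k"
    using less_exp[of k] by (metis less_imp_le of_nat_le_iff of_nat_numeral of_nat_power)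
  then have harm: "norm (harm_alt q k) \<le> 2^k * (2 / r^2)"
    using norm_harm_alt_le[OF q(2), of k] unfolding r_def
    by (meson order.trans mult_right_mono zero_le_divide_iff zero_le_numeral zero_le_power2)
  have "norm (wz_F q 0 (q ^ (2*n)) k * harm_alt q k * (1 - q)^2)
      = norm ((1 - q ^ (4*k+1)) / (1 - q)) * norm (summand_prod q 0 (q ^ (2*n)) k)
        * norm (terminating_factor q (q ^ (2*n)) k) * norm (harm_alt q k) * norm ((1 - q)^2)"
    unfolding wz_F_def norm_mult ..
  also have "\<dots> \<le> (2/r) * (B^k * norm q ^ (k^2)) * 2^k * (2^k * (2/r^2)) * 4"
    using norm_summand_prod_le[OF q(2) N, of k] norm_terminating_factor_le[OF q, of n k]
    by (intro mult_mono qint harm sq) (use r B in \<open>auto simp: B_def r_def\<close>)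
  also have "\<dots> = 16 / r^3 * ((4*B)^k * norm q ^ (k^2))"
    using r power_mult_distrib[of "2::real" 2 k]
    by (simp add: field_simps power2_eq_square power3_eq_cube)
  finally show ?thesis by (simp add: r_def B_def)
qed

lemma summable_power_mult_power_square:
  fixes r D :: real
  assumes "0 \<le> r" "r < 1" "0 \<le> D"
  shows "summable (\<lambda>k. D^k * r ^ (k^2))"
proof -
  have "(\<lambda>k. D * r^k) \<longlonglongrightarrow> D * 0" using assms by (intro tendsto_intros) simp
  then have "eventually (\<lambda>k. D * r^k < 1/2) sequentially" by (intro order_tendstoD(2)) auto
  then have "eventually (\<lambda>k. norm (D^k * r ^ (k^2)) \<le> (1/2)^k) sequentially"
  proof (rule eventually_mono)
    fix k assume k: "D * r^k < 1/2"
    have "D^k * r ^ (k^2) = (D * r^k)^k"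
      by (simp add: power_mult_distrib power2_eq_square power_mult[symmetric] mult.commute)
    also have "\<dots> \<le> (1/2)^k" using k assms by (intro power_mono) auto
    finally show "norm (D^k * r ^ (k^2)) \<le> (1/2)^k" using assms by simp
  qed
  then show ?thesis by (rule summable_comparison_test_ev) (simp add: summable_geometric)
qed

lemma differentiated_series_sum:
  assumes q: "q \<noteq> 0" "norm q < 1"
  shows "summable (\<lambda>k. wz_F q 0 0 k * harm_alt q k * (1 - q)^2)
    \<and> (\<Sum>k. wz_F q 0 0 k * harm_alt q k * (1 - q)^2)
       = qpoch_inf q (q^2) * qpoch_inf (q^3) (q^2) / (qpoch_inf (q^2) (q^2))^2
         * (\<Sum>j. if j = 0 then 0 else q ^ (2*j) / (qint q (2*j))^2)"
proof -
  define a where "a k n = wz_F q 0 (q ^ (2*n)) k * harm_alt q k * (1 - q)^2" for k n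
  define b where "b k = wz_F q 0 0 k * harm_alt q k * (1 - q)^2" for k
  define M where "M k = 16 / (1 - norm q)^3 * ((4 * (8 / (1 - norm q)^4))^k * norm q ^ (k^2))" for k
  define f where "f j = (if j = 0 then 0 else q ^ (2*j) / (qint q (2*j))^2)" for j
  define P where "P = qpoch_inf q (q^2) * qpoch_inf (q^3) (q^2) / (qpoch_inf (q^2) (q^2))^2"
  have "summable M"
    unfolding M_def using q by (intro summable_mult summable_power_mult_power_square) auto
  moreover have "(\<lambda>n. a k n) \<longlonglongrightarrow> b k" for k
    unfolding a_def b_def by (intro tendsto_intros wz_F_LIMSEQ[OF q])
  moreover have "norm (a k n) \<le> M k" for k n
    unfolding a_def M_def by (rule norm_differentiated_term_le[OF q])
  then have "eventually (\<lambda>(k, n). norm (a k n) \<le> M k) (at_top \<times>\<^sub>F sequentially)"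
    by (intro always_eventually) auto
  ultimately have tannery: "summable (\<lambda>k. norm (b k))" "(\<lambda>n. \<Sum>k. a k n) \<longlonglongrightarrow> suminf b"
    using tannerys_theorem[of a b sequentially M] by auto
  have "(\<Sum>k. a k n) = (\<Prod>i<n. step_factor q 0 (q ^ (2*i))) * ((1 - q)^2 * harm_even q n)" for n
  proof -
    have "(\<Sum>k. a k n) = (\<Sum>k\<le>n. a k n)"
      by (rule suminf_finite) (use terminating_factor_vanishes[OF q(1)] in \<open>auto simp: a_def wz_F_def\<close>)
    also have "\<dots> = (\<Sum>k\<le>n. wz_F q 0 (q ^ (2*n)) k * harm_alt q k) * (1 - q)^2"
      by (simp add: a_def sum_distrib_right)
    also have "\<dots> = (\<Prod>i<n. step_factor q 0 (q ^ (2*i))) * ((1 - q)^2 * harm_even q n)"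
      by (simp only: differentiated_summation[OF q]) (simp add: mult_ac)
    finally show ?thesis .
  qed
  moreover have "(\<lambda>n. (\<Prod>i<n. step_factor q 0 (q ^ (2*i))) * ((1 - q)^2 * harm_even q n)) \<longlonglongrightarrow> P * suminf f"
  proof (intro tendsto_intros)
    show "(\<lambda>n. \<Prod>i<n. step_factor q 0 (q ^ (2*i))) \<longlonglongrightarrow> P"
      unfolding P_def by (rule step_factor_prod_LIMSEQ[OF q(2)])
    have "(\<lambda>n. \<Sum>j<Suc n. f j) \<longlonglongrightarrow> suminf f"
      unfolding f_def by (intro LIMSEQ_Suc summable_LIMSEQ summable_even_terms q(2))
    then show "(\<lambda>n. (1 - q)^2 * harm_even q n) \<longlonglongrightarrow> suminf f"
      by (simp add: harm_even_eq[OF q(2)] f_def)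
  qed
  ultimately have "suminf b = P * suminf f"
    using tannery(2) by (metis (no_types, lifting) LIMSEQ_unique ext)
  with summable_norm_cancel[OF tannery(1)] show ?thesis unfolding b_def P_def f_def by simp
qed

theorem theorem1p4:
  fixes q :: complex
  assumes "0 < norm q" and "norm q < 1"
  shows "summable (\<lambda>j::nat. if j = 0 then 0 else q ^ (2 * j) / (qint q (2 * j)) ^ 2)
    \<and> (\<lambda>k::nat. if k = 0 then 0 else
          (-1) ^ k * q ^ (k ^ 2) * qint q (4 * k + 1)
          * (qpoch q (q ^ 2) k) ^ 3 / (qpoch (q ^ 2) (q ^ 2) k) ^ 3
          * (\<Sum>i = 1..2 * k. (-1) ^ i * q ^ i / (qint q i) ^ 2))
      sums (qpoch_inf q (q ^ 2) * qpoch_inf (q ^ 3) (q ^ 2) / (qpoch_inf (q ^ 2) (q ^ 2)) ^ 2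
            * (\<Sum>j. if j = 0 then 0 else q ^ (2 * j) / (qint q (2 * j)) ^ 2))"
proof -
  have q: "q \<noteq> 0" "norm q < 1" using assms by auto
  have summand_eq: "(\<lambda>k::nat. if k = 0 then 0 else
          (-1) ^ k * q ^ (k ^ 2) * qint q (4 * k + 1)
          * (qpoch q (q ^ 2) k) ^ 3 / (qpoch (q ^ 2) (q ^ 2) k) ^ 3
          * (\<Sum>i = 1..2 * k. (-1) ^ i * q ^ i / (qint q i) ^ 2))
      = (\<lambda>k. wz_F q 0 0 k * harm_alt q k * (1 - q)^2)" (is "?lhs = ?rhs")
  proof
    fix k :: nat
    show "?lhs k = ?rhs k"
    proof (cases "k = 0")
      case True then show ?thesis by (simp add: harm_alt_def)
    next
      case False then show ?thesis
        unfolding harm_alt_eq[OF q(2), symmetric] wz_F_0_0[OF q(2)] by (simp add: mult_ac)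
    qed
  qed
  note series = differentiated_series_sum[OF q]
  show ?thesis
    unfolding summand_eq using summable_even_terms[OF q(2)] summable_sums[OF conjunct1[OF series]]
      conjunct2[OF series] by simp
qed

end
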